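(* Let $I=2$, $m_1,m_2>1$ integers, and $w_o,w_{m,1},w_{m,2},w_s\ge0$ with $w_o+w_{m,1}+w_{m,2}+w_s=1$. Define \[ u^*:=\sum_{l=1}^{2}\ \sum_{1\le i_1<\dots<i_l\le 2}\Big\{\Big(w_o+\sum_{j\in\{1,2\}\setminus\{i_1,\dots,i_l\}}w_{m,j}\Big)\prod_{t=1}^l (m_{i_t}-1)\Big\}. \] Then the condition $u^*<1/2$ is equivalent to \[ (m_1m_2-1)w_o+(m_1-1)w_{m,2}+(m_2-1)w_{m,1}<\tfrac12 . \] In particular, under this inequality, for the covariate-adaptive randomization procedure described in the context with two covariates having $m_1$ and $m_2$ levels, $(\mathbf{D}_n)_{n\ge1}$ is a positive recurrent Markov chain on $\mathbb{Z}^{m_1m_2}$.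
   Context: Two treatments, labelled 1 and 2; two covariates with $m_1$ and $m_2$ levels; strata are pairs $(k_1,k_2)$, margins $(i;k_i)$ are patients whose $i$-th covariate is at level $k_i$. Covariate profiles $Z_1,Z_2,\dots$ of sequentially arriving patients are i.i.d. multinomial over strata. For the first $n$ patients $D_n$, $D_n(i;k_i)$, $D_n(k_1,k_2)$ denote (number on treatment 1) minus (number on treatment 2) overall, in margin $(i;k_i)$, and in stratum $(k_1,k_2)$; $\mathbf{D}_n$ is the array of within-stratum differences. Procedure: fix $0<q<p<1$, $p+q=1$. Patient 1 gets treatment 1 with probability $1/2$. For $n>1$, with patient $n$ in stratum $(k_1^*,k_2^* )$, $\mathit{Imb}_n^{(1)}=w_o(D_{n-1}+1)^2+\sum_{i=1}^2 w_{m,i}(D_{n-1}(i;k_i^* )+1)^2+w_s(D_{n-1}(k_1^*,k_2^* )+1)^2$ and $\mathit{Imb}_n^{(2)}$ the same with $-1$ in place of $+1$; patient $n$ gets treatment 1 with probability $q$, $p$, or $1/2$ according as $\mathit{Imb}_n^{(1)}>$, $<$, or $=\mathit{Imb}_n^{(2)}$. *)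

theory Defs
  imports "HOL-Probability.Probability"
begin

primrec n_step :: "('s \<Rightarrow> 's pmf) \<Rightarrow> nat \<Rightarrow> 's \<Rightarrow> 's pmf" where
  "n_step K 0 x = return_pmf x"
| "n_step K (Suc n) x = bind_pmf (n_step K n x) K"

fun first_hit :: "('s \<Rightarrow> 's pmf) \<Rightarrow> nat \<Rightarrow> 's \<Rightarrow> 's \<Rightarrow> real" where
  "first_hit K 0 x y = 0"
| "first_hit K (Suc 0) x y = pmf (K x) y"
| "first_hit K (Suc (Suc n)) x y =
     measure_pmf.expectation (K x) (\<lambda>z. if z = y then 0 else first_hit K (Suc n) z y)"

definition pos_recurrent_state :: "('s \<Rightarrow> 's pmf) \<Rightarrow> 's \<Rightarrow> bool" where
  "pos_recurrent_state K x \<longleftrightarrow>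
     (\<lambda>n. first_hit K n x x) sums 1 \<and> summable (\<lambda>n. real n * first_hit K n x x)"

definition pos_recurrent_chain :: "('s \<Rightarrow> 's pmf) \<Rightarrow> 's \<Rightarrow> bool" where
  "pos_recurrent_chain K x0 \<longleftrightarrow>
     (\<forall>y. (\<exists>n\<ge>1. pmf (n_step K n x0) y > 0) \<longrightarrow> pos_recurrent_state K y)"

definition strata :: "(nat \<Rightarrow> nat) \<Rightarrow> (nat \<times> nat) set" where
  "strata m = {1..m 1} \<times> {1..m 2}"

(* state: array of within-stratum differences, D :: (nat*nat) => int (zero off strata) *)
definition overall_diff :: "(nat \<Rightarrow> nat) \<Rightarrow> (nat \<times> nat \<Rightarrow> int) \<Rightarrow> int" where
  "overall_diff m D = (\<Sum>s\<in>strata m. D s)"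

definition margin_diff :: "(nat \<Rightarrow> nat) \<Rightarrow> (nat \<times> nat \<Rightarrow> int) \<Rightarrow> nat \<Rightarrow> nat \<Rightarrow> int" where
  "margin_diff m D i k =
     (if i = 1 then (\<Sum>k2\<in>{1..m 2}. D (k, k2)) else (\<Sum>k1\<in>{1..m 1}. D (k1, k)))"

(* Imb^{(1)} (sg = 1) and Imb^{(2)} (sg = -1) for a new patient in stratum s *)
definition Imb :: "real \<Rightarrow> (nat \<Rightarrow> real) \<Rightarrow> real \<Rightarrow> (nat \<Rightarrow> nat) \<Rightarrow>
    (nat \<times> nat \<Rightarrow> int) \<Rightarrow> nat \<times> nat \<Rightarrow> int \<Rightarrow> real" where
  "Imb wo wm ws m D s sg =
     wo * (real_of_int (overall_diff m D + sg))\<^sup>2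
     + (\<Sum>i\<in>{1,2}. wm i * (real_of_int (margin_diff m D i (if i = 1 then fst s else snd s) + sg))\<^sup>2)
     + ws * (real_of_int (D s + sg))\<^sup>2"

definition prob_trt1 :: "real \<Rightarrow> real \<Rightarrow> real \<Rightarrow> (nat \<Rightarrow> real) \<Rightarrow> real \<Rightarrow> (nat \<Rightarrow> nat) \<Rightarrow>
    (nat \<times> nat \<Rightarrow> int) \<Rightarrow> nat \<times> nat \<Rightarrow> real" where
  "prob_trt1 p q wo wm ws m D s =
     (let I1 = Imb wo wm ws m D s 1; I2 = Imb wo wm ws m D s (-1)
      in if I1 > I2 then q else if I1 < I2 then p else 1/2)"

definition car_kernel :: "real \<Rightarrow> real \<Rightarrow> real \<Rightarrow> (nat \<Rightarrow> real) \<Rightarrow> real \<Rightarrow> (nat \<Rightarrow> nat) \<Rightarrow>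
    (nat \<times> nat) pmf \<Rightarrow> (nat \<times> nat \<Rightarrow> int) \<Rightarrow> (nat \<times> nat \<Rightarrow> int) pmf" where
  "car_kernel p q wo wm ws m \<pi> D =
     bind_pmf \<pi> (\<lambda>s. bind_pmf (bernoulli_pmf (prob_trt1 p q wo wm ws m D s))
        (\<lambda>t. return_pmf (if t then D(s := D s + 1) else D(s := D s - 1))))"

definition u_star :: "real \<Rightarrow> (nat \<Rightarrow> real) \<Rightarrow> (nat \<Rightarrow> nat) \<Rightarrow> real" where
  "u_star wo wm m =
     (\<Sum>S\<in>{S. S \<subseteq> {1,2::nat} \<and> S \<noteq> {}}.
        (wo + (\<Sum>j\<in>{1,2} - S. wm j)) * (\<Prod>t\<in>S. real (m t) - 1))"

end

theory Submission
  imports Defs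
begin

(* For w_s > 0 the chain satisfies Foster's drift criterion. Take the quadratic potential
   V(D) = w_o D^2 + sum_i w_{m,i} sum_k D(i;k)^2 + w_s sum_s D(s)^2. Assigning the new patient
   in stratum s to treatment 1 or 2 changes V by 1 +- 2 g(D,s), where g is the weighted
   difference seen by that patient, and Imb^(1) - Imb^(2) = 4 g(D,s); so the biased coin
   favours the sign that lowers V and E[V'] <= V + 1 - 2(p - q) E|g|. Because
   sum_s g(D,s) D(s) = V >= w_s max_s D(s)^2, E|g| grows linearly in max_s |D(s)|, hence V
   decreases in expectation outside a finite box. From any state of the box the chain reaches
   any given target within a bounded number of steps, each of probability >= min(pi) q, which
   bounds the expected return time. The displayed inequality forces w_s > 0, and u^* is just
   its left-hand side expanded. *)

definition taboo :: "('s \<Rightarrow> 's pmf) \<Rightarrow> 's \<Rightarrow> ('s \<Rightarrow> real) \<Rightarrow> 's \<Rightarrow> real" where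
  "taboo K y f x = measure_pmf.expectation (K x) (\<lambda>z. if z = y then 0 else f z)"

(* probability that the chain started at x avoids y at the times 1, ..., n *)
definition avoid_prob :: "('s \<Rightarrow> 's pmf) \<Rightarrow> 's \<Rightarrow> nat \<Rightarrow> 's \<Rightarrow> real" where
  "avoid_prob K y n = (taboo K y ^^ n) (\<lambda>_. 1)"

locale closed_finite_kernel =
  fixes K :: "'s \<Rightarrow> 's pmf" and G :: "'s set"
  assumes finite_support: "finite (set_pmf (K x))"
    and closed: "x \<in> G \<Longrightarrow> set_pmf (K x) \<subseteq> G"
begin

lemma expectation_eq_sum:
  "measure_pmf.expectation (K x) f = (\<Sum>z\<in>set_pmf (K x). pmf (K x) z * f z)"
  by (subst integral_measure_pmf_real[of "set_pmf (K x)"]) (auto simp: finite_support mult.commute)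

lemma taboo_eq_sum:
  "taboo K y f x = (\<Sum>z\<in>set_pmf (K x). pmf (K x) z * (if z = y then 0 else f z))"
  unfolding taboo_def expectation_eq_sum ..

lemma taboo_linear:
  "taboo K y (\<lambda>z. a * f z + b * h z) x = a * taboo K y f x + b * taboo K y h x"
  unfolding taboo_eq_sum sum_distrib_left sum.distrib[symmetric]
  by (intro sum.cong) (auto simp: algebra_simps)

lemma taboo_diff: "taboo K y (\<lambda>z. f z - h z) x = taboo K y f x - taboo K y h x"
  unfolding taboo_eq_sum sum_subtractf[symmetric]
  by (intro sum.cong) (auto simp: algebra_simps)

lemma taboo_mono:
  assumes "x \<in> G" "\<And>z. z \<in> G \<Longrightarrow> f z \<le> h z"
  shows "taboo K y f x \<le> taboo K y h x"
  unfolding taboo_eq_sum using assms closed by (intro sum_mono mult_left_mono) auto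

lemma taboo_nonneg:
  assumes "x \<in> G" "\<And>z. z \<in> G \<Longrightarrow> 0 \<le> f z"
  shows "0 \<le> taboo K y f x"
  unfolding taboo_eq_sum using assms closed by (intro sum_nonneg mult_nonneg_nonneg) auto

lemma taboo_le_expectation:
  assumes "x \<in> G" "\<And>z. z \<in> G \<Longrightarrow> 0 \<le> f z"
  shows "taboo K y f x \<le> measure_pmf.expectation (K x) f"
  unfolding taboo_eq_sum expectation_eq_sum using assms closed
  by (intro sum_mono mult_left_mono) auto

lemma taboo_le_one_minus:
  assumes x: "x \<in> G" and f: "\<And>w. w \<in> G \<Longrightarrow> f w \<le> 1" and a: "0 \<le> a"
    and z: "(if z = y then 0 else f z) \<le> 1 - a"
  shows "taboo K y f x \<le> 1 - pmf (K x) z * a"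
proof -
  have "taboo K y f x \<le> measure_pmf.expectation (K x) (\<lambda>w. 1 - a * indicator {z} w)"
    unfolding taboo_eq_sum expectation_eq_sum using x closed f z
    by (intro sum_mono mult_left_mono) (auto simp: indicator_def)
  also have "\<dots> = 1 - pmf (K x) z * a"
    by (simp add: integrable_measure_pmf_finite finite_support measure_pmf_single)
  finally show ?thesis .
qed

lemma taboo_le_one:
  assumes "x \<in> G" "\<And>z. z \<in> G \<Longrightarrow> f z \<le> 1"
  shows "taboo K y f x \<le> 1"
  using taboo_le_one_minus[of x f 0 y y] assms by simp

lemma taboo_pow_linear:
  "(taboo K y ^^ n) (\<lambda>z. a * f z + b * h z) = (\<lambda>x. a * (taboo K y ^^ n) f x + b * (taboo K y ^^ n) h x)"
  by (induction n) (simp_all add: taboo_linear)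

lemma taboo_pow_mono:
  assumes "\<And>z. z \<in> G \<Longrightarrow> f z \<le> h z"
  shows "x \<in> G \<Longrightarrow> (taboo K y ^^ n) f x \<le> (taboo K y ^^ n) h x"
  by (induction n arbitrary: x) (simp_all add: assms taboo_mono)

lemma taboo_pow_nonneg:
  assumes "\<And>z. z \<in> G \<Longrightarrow> 0 \<le> f z"
  shows "x \<in> G \<Longrightarrow> 0 \<le> (taboo K y ^^ n) f x"
  by (induction n arbitrary: x) (simp_all add: assms taboo_nonneg)

lemma avoid_prob_0 [simp]: "avoid_prob K y 0 = (\<lambda>_. 1)"
  by (simp add: avoid_prob_def)

lemma avoid_prob_Suc: "avoid_prob K y (Suc n) = taboo K y (avoid_prob K y n)"
  by (simp add: avoid_prob_def)

lemma avoid_prob_add: "(taboo K y ^^ n) (avoid_prob K y k) = avoid_prob K y (n + k)"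
  by (simp add: avoid_prob_def funpow_add)

lemma avoid_prob_nonneg: "x \<in> G \<Longrightarrow> 0 \<le> avoid_prob K y n x"
  by (induction n arbitrary: x) (simp_all add: avoid_prob_Suc taboo_nonneg)

lemma avoid_prob_le_one: "x \<in> G \<Longrightarrow> avoid_prob K y n x \<le> 1"
  by (induction n arbitrary: x) (simp_all add: avoid_prob_Suc taboo_le_one)

lemma avoid_prob_Suc_le: "x \<in> G \<Longrightarrow> avoid_prob K y (Suc n) x \<le> avoid_prob K y n x"
proof (induction n arbitrary: x)
  case 0
  then show ?case by (simp add: avoid_prob_Suc taboo_le_one)
next
  case (Suc n)
  then show ?case by (simp add: avoid_prob_Suc[where n="Suc n"] avoid_prob_Suc[where n=n] taboo_mono)
qed

lemma avoid_prob_antimono: "x \<in> G \<Longrightarrow> n \<le> k \<Longrightarrow> avoid_prob K y k x \<le> avoid_prob K y n x"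
  using lift_Suc_antimono_le[of "\<lambda>n. avoid_prob K y n x"] avoid_prob_Suc_le by blast

lemma first_hit_eq_avoid_prob:
  "first_hit K (Suc n) x y = avoid_prob K y n x - avoid_prob K y (Suc n) x"
proof (induction n arbitrary: x)
  case 0
  have "taboo K y (\<lambda>_. 1) x = measure_pmf.expectation (K x) (\<lambda>z. 1 - indicator {y} z)"
    unfolding taboo_def by (intro Bochner_Integration.integral_cong) auto
  then show ?case
    by (simp add: avoid_prob_def integrable_measure_pmf_finite finite_support measure_pmf_single)
next
  case (Suc n)
  have "first_hit K (Suc (Suc n)) x y
      = taboo K y (\<lambda>z. avoid_prob K y n z - avoid_prob K y (Suc n) z) x"
    unfolding taboo_def first_hit.simps(3) Suc.IH ..
  then show ?case by (simp add: taboo_diff avoid_prob_Suc)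
qed

lemma avoid_prob_descent:
  assumes c: "0 \<le> c" "c \<le> 1"
    and at_target: "\<And>x. x \<in> G \<Longrightarrow> d x = 0 \<Longrightarrow> x = y"
    and descent: "\<And>x. x \<in> G \<Longrightarrow> x \<noteq> y \<Longrightarrow> \<exists>z\<in>G. Suc (d z) = d x \<and> c \<le> pmf (K x) z"
  shows "x \<in> G \<Longrightarrow> x \<noteq> y \<Longrightarrow> avoid_prob K y (d x) x \<le> 1 - c ^ d x"
proof (induction "d x" arbitrary: x)
  case 0
  then show ?case using at_target by metis
next
  case (Suc L)
  obtain z where z: "z \<in> G" "Suc (d z) = d x" "c \<le> pmf (K x) z"
    using descent Suc.prems by blast
  have "d z = L" using z(2) Suc.hyps(2) by simp
  then have "(if z = y then 0 else avoid_prob K y L z) \<le> 1 - c ^ L"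
    using Suc.hyps(1)[of z] z c by (auto intro: power_le_one)
  then have "avoid_prob K y (Suc L) x \<le> 1 - pmf (K x) z * c ^ L"
    unfolding avoid_prob_Suc using Suc.prems c
    by (intro taboo_le_one_minus) (auto intro: avoid_prob_le_one)
  also have "\<dots> \<le> 1 - c ^ Suc L"
    using z c by (simp add: mult_right_mono)
  finally show ?case using Suc.hyps(2) by simp
qed

lemma avoid_prob_telescope_le:
  assumes "x \<in> G"
  shows "(\<Sum>n<N. avoid_prob K y n x - avoid_prob K y (n + k) x) \<le> k"
proof -
  let ?r = "\<lambda>n. avoid_prob K y n x"
  have "?r n - ?r (n + k) = (\<Sum>j<k. ?r (j + n) - ?r (Suc (j + n)))" for n
    using sum_lessThan_telescope'[where f="\<lambda>j. ?r (j + n)"] by (simp add: add.commute)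
  then have "(\<Sum>n<N. ?r n - ?r (n + k)) = (\<Sum>n<N. \<Sum>j<k. ?r (j + n) - ?r (Suc (j + n)))"
    by simp
  also have "\<dots> = (\<Sum>j<k. ?r j - ?r (j + N))"
  proof -
    have "(\<Sum>n<N. ?r (j + n) - ?r (Suc (j + n))) = ?r j - ?r (j + N)" for j
      using sum_lessThan_telescope'[where f="\<lambda>n. ?r (j + n)"] by simp
    then show ?thesis by (subst sum.swap) simp
  qed
  also have "\<dots> \<le> (\<Sum>j<k. 1)"
    using assms by (intro sum_mono) (smt (verit) avoid_prob_nonneg avoid_prob_le_one)
  finally show ?thesis by simp
qed

lemma pos_recurrent_state_if_bounded_avoid_sums:
  assumes y: "y \<in> G" and bounded: "\<And>N. (\<Sum>n<N. avoid_prob K y n y) \<le> B"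
  shows "pos_recurrent_state K y"
proof -
  let ?r = "\<lambda>n. avoid_prob K y n y" and ?f = "\<lambda>n. first_hit K n y y"
  have r_bounds: "0 \<le> ?r n" "?r n \<le> 1" "?r (Suc n) \<le> ?r n" for n
    using avoid_prob_nonneg avoid_prob_le_one avoid_prob_Suc_le y by auto
  have "summable ?r"
    using r_bounds bounded by (intro summableI_nonneg_bounded) auto
  then have r_lim: "?r \<longlonglongrightarrow> 0"
    by (rule summable_LIMSEQ_zero)
  have f_Suc: "?f (Suc n) = ?r n - ?r (Suc n)" for n
    by (rule first_hit_eq_avoid_prob)
  have partial_sums: "(\<Sum>i<Suc N. ?f i) = 1 - ?r N" for N
    by (induction N) (simp_all add: f_Suc)
  have "(\<lambda>N. \<Sum>i<Suc N. ?f i) \<longlonglongrightarrow> 1"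
    unfolding partial_sums using tendsto_diff[OF tendsto_const r_lim, of 1] by simp
  then have "?f sums 1"
    unfolding sums_def by (subst (asm) filterlim_sequentially_Suc)
  moreover have "summable (\<lambda>i. real i * ?f i)"
  proof (rule summableI_nonneg_bounded)
    show "0 \<le> real i * ?f i" for i
      by (cases i) (use r_bounds in \<open>simp_all add: f_Suc\<close>)
    have weighted_sums: "(\<Sum>i<Suc N. real i * ?f i) = (\<Sum>j<N. ?r j) - real N * ?r N" for N
      by (induction N) (simp_all add: f_Suc algebra_simps)
    show "(\<Sum>i<n. real i * ?f i) \<le> max 0 B" for n
    proof (cases n)
      case (Suc N)
      have "0 \<le> real N * ?r N" using r_bounds by simp
      then show ?thesis unfolding Suc weighted_sums using bounded[of N] by linarith
    qed simp
  qed
  ultimately show ?thesis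
    unfolding pos_recurrent_state_def by simp
qed

lemma avoid_prob_sum_le:
  fixes V :: "'s \<Rightarrow> real" and b :: real
  assumes V_nonneg: "\<And>x. x \<in> G \<Longrightarrow> 0 \<le> V x"
    and drift: "\<And>x. x \<in> G \<Longrightarrow> measure_pmf.expectation (K x) V \<le> V x - 1 + b * indicator C x"
  shows "x \<in> G \<Longrightarrow>
    (\<Sum>n<N. avoid_prob K y n x) + (taboo K y ^^ N) V x
      \<le> V x + b * (\<Sum>n<N. (taboo K y ^^ n) (indicator C) x)"
proof (induction N arbitrary: x)
  case (Suc N)
  have "(taboo K y ^^ Suc N) V x = (taboo K y ^^ N) (taboo K y V) x"
    by (simp only: funpow_Suc_right o_apply)
  also have "\<dots> \<le> (taboo K y ^^ N) (\<lambda>z. 1 * V z + 1 * (b * indicator C z + (-1) * 1)) x"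
  proof (intro taboo_pow_mono Suc.prems)
    fix z assume "z \<in> G"
    then show "taboo K y V z \<le> 1 * V z + 1 * (b * indicator C z + (-1) * 1)"
      using taboo_le_expectation[of z V y] V_nonneg drift[of z] by simp
  qed
  also have "\<dots> = (taboo K y ^^ N) V x + b * (taboo K y ^^ N) (indicator C) x - avoid_prob K y N x"
    unfolding taboo_pow_linear by (simp add: avoid_prob_def)
  finally show ?case using Suc.IH[OF Suc.prems] by (simp add: distrib_left)
qed simp

theorem pos_recurrent_state_if_drift:
  fixes V :: "'s \<Rightarrow> real" and b \<epsilon> :: real
  assumes y: "y \<in> G"
    and V_nonneg: "\<And>x. x \<in> G \<Longrightarrow> 0 \<le> V x"
    and drift: "\<And>x. x \<in> G \<Longrightarrow> measure_pmf.expectation (K x) V \<le> V x - 1 + b * indicator C x"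
    and b: "0 \<le> b" and \<epsilon>: "0 < \<epsilon>"
    and leave_C: "\<And>x. x \<in> G \<Longrightarrow> x \<in> C \<Longrightarrow> avoid_prob K y k x \<le> 1 - \<epsilon>"
  shows "pos_recurrent_state K y"
proof (rule pos_recurrent_state_if_bounded_avoid_sums[OF y])
  \<comment> \<open>\<open>indicator C \<le> (1 - avoid_prob K y k) / \<epsilon>\<close>, and the killed iterates of the right-hand side telescope\<close>
  define a where "a = 1 / \<epsilon>"
  have a: "0 \<le> a" using \<epsilon> by (simp add: a_def)
  have "indicator C z \<le> a * 1 + (- a) * avoid_prob K y k z" if z: "z \<in> G" for z
  proof (cases "z \<in> C")
    case True
    then show ?thesis using leave_C[OF z] \<epsilon> by (simp add: a_def field_simps)
  next
    case False
    then show ?thesis using mult_left_le[OF avoid_prob_le_one[OF z] a] by simp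
  qed
  then have "(taboo K y ^^ n) (indicator C) y
      \<le> (taboo K y ^^ n) (\<lambda>z. a * 1 + (- a) * avoid_prob K y k z) y" for n
    using y by (intro taboo_pow_mono)
  also have "(taboo K y ^^ n) (\<lambda>z. a * 1 + (- a) * avoid_prob K y k z) y
      = a * (avoid_prob K y n y - avoid_prob K y (n + k) y)" for n
    unfolding taboo_pow_linear avoid_prob_add by (simp add: avoid_prob_def right_diff_distrib)
  finally have "(\<Sum>n<N. (taboo K y ^^ n) (indicator C) y)
      \<le> (\<Sum>n<N. a * (avoid_prob K y n y - avoid_prob K y (n + k) y))" for N
    by (rule sum_mono)
  also have "\<dots> N \<le> a * k" for N
    unfolding sum_distrib_left[symmetric] using avoid_prob_telescope_le[OF y] a
    by (rule mult_left_mono)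
  finally have "b * (\<Sum>n<N. (taboo K y ^^ n) (indicator C) y) \<le> b * (a * k)" for N
    using b by (rule mult_left_mono)
  moreover have "0 \<le> (taboo K y ^^ N) V y" for N
    using taboo_pow_nonneg V_nonneg y by blast
  moreover have "(\<Sum>n<N. avoid_prob K y n y) + (taboo K y ^^ N) V y
      \<le> V y + b * (\<Sum>n<N. (taboo K y ^^ n) (indicator C) y)" for N
    by (rule avoid_prob_sum_le) (use V_nonneg drift y in auto)
  ultimately show "(\<Sum>n<N. avoid_prob K y n y) \<le> V y + b * (a * k)" for N
    by (smt (verit))
qed

end

lemma sum_square_update:
  fixes f :: "'a \<Rightarrow> real"
  assumes "finite A" "a \<in> A"
  shows "(\<Sum>k\<in>A. (f k + (if k = a then c else 0))\<^sup>2) = (\<Sum>k\<in>A. (f k)\<^sup>2) + 2 * c * f a + c\<^sup>2"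
proof -
  have "(\<Sum>k\<in>A. (f k + (if k = a then c else 0))\<^sup>2)
      = (\<Sum>k\<in>A. (f k)\<^sup>2 + (if k = a then 2 * c * f k + c\<^sup>2 else 0))"
    by (rule sum.cong) (auto simp: power2_eq_square algebra_simps)
  then show ?thesis
    using assms by (simp add: sum.distrib)
qed

definition strata_supported :: "(nat \<Rightarrow> nat) \<Rightarrow> (nat \<times> nat \<Rightarrow> int) set" where
  "strata_supported m = {D. \<forall>s. s \<notin> strata m \<longrightarrow> D s = 0}"

locale car_chain =
  fixes p q wo ws :: real and wm :: "nat \<Rightarrow> real" and m :: "nat \<Rightarrow> nat"
    and \<pi> :: "(nat \<times> nat) pmf"
  assumes levels: "m 1 \<ge> 1" "m 2 \<ge> 1"
    and weights_nonneg: "wo \<ge> 0" "wm 1 \<ge> 0" "wm 2 \<ge> 0"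
    and ws_pos: "ws > 0"
    and weights_sum: "wo + wm 1 + wm 2 + ws = 1"
    and pq: "0 < q" "q < p" "p < 1" "p + q = 1"
    and support_\<pi>: "set_pmf \<pi> = strata m"
begin

abbreviation "K \<equiv> car_kernel p q wo wm ws m \<pi>"
abbreviation "prob1 \<equiv> prob_trt1 p q wo wm ws m"
abbreviation "overall D \<equiv> real_of_int (overall_diff m D)"
abbreviation "margin D i k \<equiv> real_of_int (margin_diff m D i k)"

definition incr :: "(nat \<times> nat \<Rightarrow> int) \<Rightarrow> nat \<times> nat \<Rightarrow> nat \<times> nat \<Rightarrow> int" where
  "incr D s = D(s := D s + 1)"

definition decr :: "(nat \<times> nat \<Rightarrow> int) \<Rightarrow> nat \<times> nat \<Rightarrow> nat \<times> nat \<Rightarrow> int" where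
  "decr D s = D(s := D s - 1)"

lemma finite_strata [simp]: "finite (strata m)"
  by (simp add: strata_def)

lemma stratum_1_1: "(1, 1) \<in> strata m"
  using levels by (simp add: strata_def)

lemma prob1_bounds: "q \<le> prob1 D s" "prob1 D s \<le> p"
  using pq by (auto simp: prob_trt1_def Let_def)

lemma sum_pmf_strata: "(\<Sum>s\<in>strata m. pmf \<pi> s) = 1"
  using support_\<pi> by (intro sum_pmf_eq_1) auto

lemma expectation_K:
  "measure_pmf.expectation (K D) h =
    (\<Sum>s\<in>strata m. pmf \<pi> s * (prob1 D s * h (incr D s) + (1 - prob1 D s) * h (decr D s)))"
proof -
  have assign: "measure_pmf.expectation (bernoulli_pmf (prob1 D s)
        \<bind> (\<lambda>t. return_pmf (if t then D(s := D s + 1) else D(s := D s - 1)))) h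
      = prob1 D s * h (incr D s) + (1 - prob1 D s) * h (decr D s)" for s
    using prob1_bounds[of D s] pq
    by (subst pmf_expectation_bind[where A=UNIV]) (auto simp: UNIV_bool incr_def decr_def)
  show ?thesis
    unfolding car_kernel_def using support_\<pi>
    by (subst pmf_expectation_bind[where A="strata m"]) (auto simp: assign)
qed

lemma set_pmf_K: "set_pmf (K D) \<subseteq> (\<Union>s\<in>strata m. {incr D s, decr D s})"
  by (auto simp: car_kernel_def support_\<pi> incr_def decr_def)

lemma incr_supported: "D \<in> strata_supported m \<Longrightarrow> s \<in> strata m \<Longrightarrow> incr D s \<in> strata_supported m"
  and decr_supported: "D \<in> strata_supported m \<Longrightarrow> s \<in> strata m \<Longrightarrow> decr D s \<in> strata_supported m"
  by (auto simp: strata_supported_def incr_def decr_def)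

sublocale closed_finite_kernel K "strata_supported m"
proof
  show "finite (set_pmf (K D))" for D
    using set_pmf_K by (rule finite_subset) auto
  show "set_pmf (K D) \<subseteq> strata_supported m" if "D \<in> strata_supported m" for D
    using set_pmf_K incr_supported[OF that] decr_supported[OF that] by blast
qed

lemma update_apply: "((D :: 'a \<Rightarrow> int)(s := D s + c)) t = D t + (if t = s then c else 0)"
  by auto

lemma overall_diff_update:
  "s \<in> strata m \<Longrightarrow> overall_diff m (D(s := D s + c)) = overall_diff m D + c"
  unfolding overall_diff_def update_apply by (simp add: sum.distrib)

lemma margin_diff_update:
  assumes "s \<in> strata m"
  shows "margin_diff m (D(s := D s + c)) 1 k = margin_diff m D 1 k + (if k = fst s then c else 0)"
    and "margin_diff m (D(s := D s + c)) 2 k = margin_diff m D 2 k + (if k = snd s then c else 0)"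
  using assms unfolding margin_diff_def update_apply
  by (cases s; auto simp: sum.distrib strata_def)+

definition potential :: "(nat \<times> nat \<Rightarrow> int) \<Rightarrow> real" where
  "potential D = wo * (overall D)\<^sup>2 + wm 1 * (\<Sum>k\<in>{1..m 1}. (margin D 1 k)\<^sup>2)
     + wm 2 * (\<Sum>k\<in>{1..m 2}. (margin D 2 k)\<^sup>2) + ws * (\<Sum>t\<in>strata m. (real_of_int (D t))\<^sup>2)"

definition weighted_diff :: "(nat \<times> nat \<Rightarrow> int) \<Rightarrow> nat \<times> nat \<Rightarrow> real" where
  "weighted_diff D s = wo * overall D + wm 1 * margin D 1 (fst s) + wm 2 * margin D 2 (snd s)
     + ws * real_of_int (D s)"

lemma potential_nonneg: "0 \<le> potential D"
  unfolding potential_def using weights_nonneg ws_pos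
  by (intro add_nonneg_nonneg mult_nonneg_nonneg sum_nonneg) auto

lemma potential_update:
  assumes s: "s \<in> strata m" and c: "c = 1 \<or> c = -1"
  shows "potential (D(s := D s + c)) = potential D + 2 * real_of_int c * weighted_diff D s + 1"
proof -
  have c2: "(real_of_int c)\<^sup>2 = 1" using c by auto
  have s1: "fst s \<in> {1..m 1}" and s2: "snd s \<in> {1..m 2}" using s by (auto simp: strata_def)
  have "overall (D(s := D s + c)) = overall D + real_of_int c"
    by (simp only: overall_diff_update[OF s] of_int_add)
  then have overall: "(overall (D(s := D s + c)))\<^sup>2 = (overall D)\<^sup>2 + 2 * real_of_int c * overall D + 1"
    using c2 by (simp add: power2_eq_square algebra_simps)
  have "(\<Sum>k\<in>{1..m 1}. (margin (D(s := D s + c)) 1 k)\<^sup>2)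
      = (\<Sum>k\<in>{1..m 1}. (margin D 1 k + (if k = fst s then real_of_int c else 0))\<^sup>2)"
    by (intro sum.cong refl) (simp only: margin_diff_update[OF s] of_int_add if_distrib of_int_0)
  then have margin1: "(\<Sum>k\<in>{1..m 1}. (margin (D(s := D s + c)) 1 k)\<^sup>2)
      = (\<Sum>k\<in>{1..m 1}. (margin D 1 k)\<^sup>2) + 2 * real_of_int c * margin D 1 (fst s) + 1"
    using sum_square_update[OF _ s1] c2 by simp
  have "(\<Sum>k\<in>{1..m 2}. (margin (D(s := D s + c)) 2 k)\<^sup>2)
      = (\<Sum>k\<in>{1..m 2}. (margin D 2 k + (if k = snd s then real_of_int c else 0))\<^sup>2)"
    by (intro sum.cong refl) (simp only: margin_diff_update[OF s] of_int_add if_distrib of_int_0)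
  then have margin2: "(\<Sum>k\<in>{1..m 2}. (margin (D(s := D s + c)) 2 k)\<^sup>2)
      = (\<Sum>k\<in>{1..m 2}. (margin D 2 k)\<^sup>2) + 2 * real_of_int c * margin D 2 (snd s) + 1"
    using sum_square_update[OF _ s2] c2 by simp
  have strata: "(\<Sum>t\<in>strata m. (real_of_int ((D(s := D s + c)) t))\<^sup>2)
      = (\<Sum>t\<in>strata m. (real_of_int (D t))\<^sup>2) + 2 * real_of_int c * real_of_int (D s) + 1"
    using sum_square_update[OF finite_strata s, of "\<lambda>t. real_of_int (D t)" "real_of_int c"] c2
    by (simp only: update_apply of_int_add if_distrib of_int_0)
  show ?thesis
    unfolding potential_def weighted_diff_def overall margin1 margin2 strata
    using weights_sum by (simp add: algebra_simps)
qed

lemma Imb_difference: "Imb wo wm ws m D s 1 - Imb wo wm ws m D s (-1) = 4 * weighted_diff D s"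
  unfolding Imb_def weighted_diff_def by (simp add: power2_eq_square algebra_simps)

lemma prob1_eq:
  "prob1 D s = (if weighted_diff D s > 0 then q else if weighted_diff D s < 0 then p else 1/2)"
  using Imb_difference[of D s] unfolding prob_trt1_def Let_def by auto

lemma expected_potential_in_stratum:
  assumes s: "s \<in> strata m"
  shows "prob1 D s * potential (incr D s) + (1 - prob1 D s) * potential (decr D s)
    \<le> potential D + 1 - 2 * (p - q) * \<bar>weighted_diff D s\<bar>"
proof -
  have incr: "potential (incr D s) = potential D + 2 * weighted_diff D s + 1"
    using potential_update[OF s, of 1 D] by (simp add: incr_def)
  have decr: "potential (decr D s) = potential D - 2 * weighted_diff D s + 1"
    using potential_update[OF s, of "-1" D] by (simp add: decr_def)
  have "prob1 D s * potential (incr D s) + (1 - prob1 D s) * potential (decr D s)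
      = potential D + 1 + 2 * ((2 * prob1 D s - 1) * weighted_diff D s)"
    unfolding incr decr by (simp add: algebra_simps)
  moreover have "(p + q) * weighted_diff D s = weighted_diff D s"
    using pq by simp
  then have "(2 * prob1 D s - 1) * weighted_diff D s = - (p - q) * \<bar>weighted_diff D s\<bar>"
    by (auto simp: prob1_eq[of D s] algebra_simps)
  ultimately show ?thesis
    by (simp add: algebra_simps)
qed

lemma expected_potential_le:
  "measure_pmf.expectation (K D) potential
    \<le> potential D + 1 - 2 * (p - q) * (\<Sum>s\<in>strata m. pmf \<pi> s * \<bar>weighted_diff D s\<bar>)"
proof -
  have "measure_pmf.expectation (K D) potential
      \<le> (\<Sum>s\<in>strata m. pmf \<pi> s * (potential D + 1 - 2 * (p - q) * \<bar>weighted_diff D s\<bar>))"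
    unfolding expectation_K by (intro sum_mono mult_left_mono expected_potential_in_stratum) auto
  also have "\<dots> = potential D + 1 - 2 * (p - q) * (\<Sum>s\<in>strata m. pmf \<pi> s * \<bar>weighted_diff D s\<bar>)"
    by (simp add: sum_subtractf sum.distrib sum_distrib_left[symmetric] sum_distrib_right[symmetric]
        sum_pmf_strata algebra_simps)
  finally show ?thesis .
qed

lemma potential_eq_sum_weighted_diff:
  "potential D = (\<Sum>s\<in>strata m. weighted_diff D s * real_of_int (D s))"
proof -
  have overall: "(\<Sum>s\<in>strata m. overall D * real_of_int (D s)) = (overall D)\<^sup>2"
    by (simp add: overall_diff_def sum_distrib_left[symmetric] power2_eq_square)
  have "(\<Sum>s\<in>strata m. margin D 1 (fst s) * real_of_int (D s))
      = (\<Sum>a\<in>{1..m 1}. \<Sum>b\<in>{1..m 2}. margin D 1 a * real_of_int (D (a, b)))"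
    unfolding strata_def sum.cartesian_product by (simp add: case_prod_beta)
  also have "\<dots> = (\<Sum>k\<in>{1..m 1}. (margin D 1 k)\<^sup>2)"
    by (simp add: sum_distrib_left[symmetric] power2_eq_square margin_diff_def)
  finally have margin1: "(\<Sum>s\<in>strata m. margin D 1 (fst s) * real_of_int (D s))
      = (\<Sum>k\<in>{1..m 1}. (margin D 1 k)\<^sup>2)" .
  have "(\<Sum>s\<in>strata m. margin D 2 (snd s) * real_of_int (D s))
      = (\<Sum>a\<in>{1..m 1}. \<Sum>b\<in>{1..m 2}. margin D 2 b * real_of_int (D (a, b)))"
    unfolding strata_def sum.cartesian_product by (simp add: case_prod_beta)
  also have "\<dots> = (\<Sum>b\<in>{1..m 2}. \<Sum>a\<in>{1..m 1}. margin D 2 b * real_of_int (D (a, b)))"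
    by (rule sum.swap)
  also have "\<dots> = (\<Sum>k\<in>{1..m 2}. (margin D 2 k)\<^sup>2)"
    by (simp add: sum_distrib_left[symmetric] power2_eq_square margin_diff_def)
  finally have margin2: "(\<Sum>s\<in>strata m. margin D 2 (snd s) * real_of_int (D s))
      = (\<Sum>k\<in>{1..m 2}. (margin D 2 k)\<^sup>2)" .
  show ?thesis
    unfolding weighted_diff_def distrib_right sum.distrib mult.assoc sum_distrib_left[symmetric]
      overall margin1 margin2
    by (simp add: potential_def overall_diff_def power2_eq_square)
qed

lemma ws_abs_le_sum_weighted_diff:
  assumes s0: "s0 \<in> strata m" and max: "\<And>s. s \<in> strata m \<Longrightarrow> \<bar>D s\<bar> \<le> \<bar>D s0\<bar>"
  shows "ws * \<bar>real_of_int (D s0)\<bar> \<le> (\<Sum>s\<in>strata m. \<bar>weighted_diff D s\<bar>)"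
proof -
  let ?a = "\<bar>real_of_int (D s0)\<bar>"
  have "ws * ?a * ?a = ws * (real_of_int (D s0))\<^sup>2"
    by (simp add: power2_eq_square)
  also have "\<dots> \<le> potential D"
  proof -
    have "ws * (real_of_int (D s0))\<^sup>2 \<le> ws * (\<Sum>t\<in>strata m. (real_of_int (D t))\<^sup>2)"
      using ws_pos s0 by (intro mult_left_mono member_le_sum) auto
    then show ?thesis
      unfolding potential_def using weights_nonneg
      by (smt (verit) mult_nonneg_nonneg sum_nonneg zero_le_power2)
  qed
  also have "\<dots> \<le> (\<Sum>s\<in>strata m. \<bar>weighted_diff D s\<bar> * ?a)"
    unfolding potential_eq_sum_weighted_diff
  proof (intro sum_mono)
    fix s assume "s \<in> strata m"
    then have "\<bar>real_of_int (D s)\<bar> \<le> ?a" using max by fastforce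
    then have "\<bar>weighted_diff D s\<bar> * \<bar>real_of_int (D s)\<bar> \<le> \<bar>weighted_diff D s\<bar> * ?a"
      by (intro mult_left_mono) auto
    then show "weighted_diff D s * real_of_int (D s) \<le> \<bar>weighted_diff D s\<bar> * ?a"
      by (metis abs_ge_self abs_mult order_trans)
  qed
  finally have scaled: "ws * ?a * ?a \<le> (\<Sum>s\<in>strata m. \<bar>weighted_diff D s\<bar>) * ?a"
    by (simp add: sum_distrib_right)
  show ?thesis
  proof (cases "?a = 0")
    case True
    then show ?thesis by (simp add: sum_nonneg)
  next
    case False
    then show ?thesis using mult_right_le_imp_le[OF scaled] by simp
  qed
qed

definition min_stratum_prob :: real where
  "min_stratum_prob = Min (pmf \<pi> ` strata m)"

lemma min_stratum_prob_le: "s \<in> strata m \<Longrightarrow> min_stratum_prob \<le> pmf \<pi> s"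
  unfolding min_stratum_prob_def by (intro Min_le) auto

lemma min_stratum_prob_pos: "0 < min_stratum_prob"
proof -
  have "min_stratum_prob \<in> pmf \<pi> ` strata m"
    unfolding min_stratum_prob_def using stratum_1_1 by (intro Min_in) auto
  then show ?thesis
    using support_\<pi> by (auto simp: pmf_positive)
qed

definition radius :: nat where
  "radius = nat \<lceil>1 / ((p - q) * min_stratum_prob * ws)\<rceil>"

definition bounded_states :: "(nat \<times> nat \<Rightarrow> int) set" where
  "bounded_states = {D. \<forall>s\<in>strata m. \<bar>D s\<bar> \<le> int radius}"

lemma potential_drift:
  "measure_pmf.expectation (K D) potential \<le> potential D - 1 + 2 * indicator bounded_states D"
proof -
  let ?S = "\<Sum>s\<in>strata m. pmf \<pi> s * \<bar>weighted_diff D s\<bar>"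
  have pq_pos: "0 < p - q" using pq by simp
  have S_nonneg: "0 \<le> ?S" by (simp add: sum_nonneg)
  show ?thesis
  proof (cases "D \<in> bounded_states")
    case True
    then show ?thesis
      using expected_potential_le[of D] mult_nonneg_nonneg[OF _ S_nonneg, of "2 * (p - q)"] pq_pos
      by simp
  next
    case False
    define M where "M = Max ((\<lambda>s. \<bar>D s\<bar>) ` strata m)"
    have "M \<in> (\<lambda>s. \<bar>D s\<bar>) ` strata m"
      unfolding M_def using stratum_1_1 by (intro Max_in) auto
    then obtain s0 where s0: "s0 \<in> strata m" and s0_max: "\<bar>D s0\<bar> = M"
      by blast
    have max: "\<bar>D s\<bar> \<le> \<bar>D s0\<bar>" if "s \<in> strata m" for s
      unfolding s0_max M_def using that by (intro Max_ge) auto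
    have "int radius < \<bar>D s0\<bar>"
      using False max by (force simp: bounded_states_def not_le)
    moreover have "1 / ((p - q) * min_stratum_prob * ws) \<le> real radius"
      unfolding radius_def by linarith
    ultimately have "1 / ((p - q) * min_stratum_prob * ws) \<le> \<bar>real_of_int (D s0)\<bar>"
      by linarith
    then have "1 \<le> (p - q) * (min_stratum_prob * (ws * \<bar>real_of_int (D s0)\<bar>))"
      using pq_pos min_stratum_prob_pos ws_pos by (simp add: field_simps)
    also have "\<dots> \<le> (p - q) * (min_stratum_prob * (\<Sum>s\<in>strata m. \<bar>weighted_diff D s\<bar>))"
      using ws_abs_le_sum_weighted_diff[of s0 D, OF s0 max] pq_pos min_stratum_prob_pos
      by (intro mult_left_mono) auto
    also have "\<dots> \<le> (p - q) * ?S"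
      unfolding sum_distrib_left using pq_pos
      by (intro mult_left_mono sum_mono mult_right_mono min_stratum_prob_le) auto
    finally have "2 \<le> 2 * (p - q) * ?S"
      by (simp only: mult.assoc)
    then show ?thesis
      using expected_potential_le[of D] False by simp
  qed
qed
lemma pmf_K_ge:
  assumes s: "s \<in> strata m" and z: "z = incr D s \<or> z = decr D s"
  shows "min_stratum_prob * q \<le> pmf (K D) z"
proof -
  let ?term = "\<lambda>s. pmf \<pi> s * (prob1 D s * indicator {z} (incr D s)
      + (1 - prob1 D s) * indicator {z} (decr D s))"
  have term_nonneg: "0 \<le> ?term s" for s
    using prob1_bounds[of D s] pq by simp
  have "q \<le> prob1 D s * indicator {z} (incr D s) + (1 - prob1 D s) * indicator {z} (decr D s)"
    using z prob1_bounds[of D s] pq by (auto simp: indicator_def)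
  then have "min_stratum_prob * q \<le> ?term s"
    using min_stratum_prob_le[OF s] pq by (intro mult_mono) auto
  also have "\<dots> \<le> (\<Sum>s\<in>strata m. ?term s)"
    using s term_nonneg by (intro member_le_sum) auto
  also have "\<dots> = pmf (K D) z"
    using expectation_K[of D "indicator {z}"] by (simp add: measure_pmf_single)
  finally show ?thesis .
qed

definition distance :: "(nat \<times> nat \<Rightarrow> int) \<Rightarrow> (nat \<times> nat \<Rightarrow> int) \<Rightarrow> nat" where
  "distance E D = (\<Sum>s\<in>strata m. nat \<bar>D s - E s\<bar>)"

lemma distance_step:
  assumes s: "s \<in> strata m"
  shows "D s < E s \<Longrightarrow> Suc (distance E (incr D s)) = distance E D"
    and "D s > E s \<Longrightarrow> Suc (distance E (decr D s)) = distance E D"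
proof -
  have "distance E D = (\<Sum>t\<in>strata m. nat \<bar>D' t - E t\<bar> + (if t = s then 1 else 0))"
    if "D' = incr D s \<and> D s < E s \<or> D' = decr D s \<and> D s > E s" for D'
    unfolding distance_def using that by (intro sum.cong) (auto simp: incr_def decr_def)
  then show "D s < E s \<Longrightarrow> Suc (distance E (incr D s)) = distance E D"
    and "D s > E s \<Longrightarrow> Suc (distance E (decr D s)) = distance E D"
    using s by (simp_all add: sum.distrib distance_def)
qed

lemma distance_eq_0:
  assumes "D \<in> strata_supported m" "E \<in> strata_supported m" "distance E D = 0"
  shows "D = E"
proof
  fix s
  show "D s = E s"
    using assms by (cases "s \<in> strata m"; cases s) (auto simp: distance_def strata_supported_def)
qed

definition step_prob :: real where
  "step_prob = min_stratum_prob * q"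

lemma step_prob_pos: "0 < step_prob" and step_prob_le_1: "step_prob \<le> 1"
proof -
  show "0 < step_prob"
    using min_stratum_prob_pos pq by (simp add: step_prob_def)
  have "min_stratum_prob \<le> 1"
    using min_stratum_prob_le[OF stratum_1_1] pmf_le_1[of \<pi> "(1, 1)"] by linarith
  then show "step_prob \<le> 1"
    using min_stratum_prob_pos pq by (simp add: step_prob_def mult_le_one)
qed

lemma avoid_prob_distance:
  assumes "E \<in> strata_supported m" "D \<in> strata_supported m" "D \<noteq> E"
  shows "avoid_prob K E (distance E D) D \<le> 1 - step_prob ^ distance E D"
proof (rule avoid_prob_descent[where d="distance E"])
  fix D' assume D': "D' \<in> strata_supported m" "D' \<noteq> E"
  have "\<exists>s\<in>strata m. D' s \<noteq> E s"
  proof (rule ccontr)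
    assume "\<not> ?thesis"
    then have "distance E D' = 0" by (simp add: distance_def)
    then show False using distance_eq_0 D' assms(1) by blast
  qed
  then obtain s where s: "s \<in> strata m" "D' s \<noteq> E s"
    by blast
  show "\<exists>z\<in>strata_supported m. Suc (distance E z) = distance E D' \<and> step_prob \<le> pmf (K D') z"
  proof (cases "D' s < E s")
    case True
    then show ?thesis
      using distance_step(1)[of s D' E, OF s(1) True] pmf_K_ge[OF s(1)] incr_supported[OF D'(1) s(1)]
      by (auto simp: step_prob_def)
  next
    case False
    then have "D' s > E s" using s by simp
    then show ?thesis
      using distance_step(2)[of s E D', OF s(1)] pmf_K_ge[OF s(1)] decr_supported[OF D'(1) s(1)]
      by (auto simp: step_prob_def)
  qed
qed (use assms step_prob_pos step_prob_le_1 distance_eq_0 in auto)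

lemma distance_incr_self: "s \<in> strata m \<Longrightarrow> distance E (incr E s) = 1"
  using distance_step(2)[of s E "incr E s"]
  by (simp add: incr_def decr_def distance_def)

definition return_horizon :: "(nat \<times> nat \<Rightarrow> int) \<Rightarrow> nat" where
  "return_horizon E = card (strata m) * radius + (\<Sum>s\<in>strata m. nat \<bar>E s\<bar>) + 2"

lemma avoid_prob_bounded_states:
  assumes E: "E \<in> strata_supported m" and D: "D \<in> strata_supported m" "D \<in> bounded_states"
  shows "avoid_prob K E (return_horizon E) D \<le> 1 - step_prob ^ return_horizon E"
proof (cases "D = E")
  case True
  \<comment> \<open>a return to \<open>E\<close> needs a first step away from it, to a neighbour at distance 1\<close>
  let ?z = "incr E (1, 1)"
  have z: "?z \<in> strata_supported m" "?z \<noteq> E" "distance E ?z = 1"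
    using incr_supported[OF E stratum_1_1] distance_incr_self[OF stratum_1_1]
    by (auto simp: incr_def dest: fun_cong[where x="(1, 1)"])
  then have "(if ?z = E then 0 else avoid_prob K E 1 ?z) \<le> 1 - step_prob"
    using avoid_prob_distance[OF E z(1,2)] by simp
  then have "avoid_prob K E 2 E \<le> 1 - pmf (K E) ?z * step_prob"
    unfolding avoid_prob_Suc[where n=1, unfolded Suc_1] using E step_prob_pos
    by (intro taboo_le_one_minus) (auto intro: avoid_prob_le_one)
  also have "\<dots> \<le> 1 - step_prob ^ 2"
    using pmf_K_ge[OF stratum_1_1, of ?z E] step_prob_pos
    by (simp add: step_prob_def power2_eq_square mult_right_mono)
  also have "\<dots> \<le> 1 - step_prob ^ return_horizon E"
    using step_prob_pos step_prob_le_1 power_decreasing[of 2 "return_horizon E" step_prob]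
    by (simp add: return_horizon_def)
  finally show ?thesis
    using avoid_prob_antimono[OF E, of 2 "return_horizon E" E] True
    by (simp add: return_horizon_def)
next
  case False
  have "distance E D \<le> (\<Sum>s\<in>strata m. radius + nat \<bar>E s\<bar>)"
    unfolding distance_def using D(2) by (intro sum_mono) (auto simp: bounded_states_def)
  then have horizon: "distance E D \<le> return_horizon E"
    by (simp add: return_horizon_def sum.distrib)
  have "avoid_prob K E (return_horizon E) D \<le> avoid_prob K E (distance E D) D"
    using avoid_prob_antimono[OF D(1) horizon] .
  also have "\<dots> \<le> 1 - step_prob ^ distance E D"
    using avoid_prob_distance[OF E D(1) False] .
  also have "\<dots> \<le> 1 - step_prob ^ return_horizon E"
    using step_prob_pos step_prob_le_1 horizon by (simp add: power_decreasing)
  finally show ?thesis .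
qed

lemma pos_recurrent_state_K: "E \<in> strata_supported m \<Longrightarrow> pos_recurrent_state K E"
  by (rule pos_recurrent_state_if_drift[where V=potential and b=2 and C=bounded_states
        and k="return_horizon E" and \<epsilon>="step_prob ^ return_horizon E"])
    (use potential_nonneg potential_drift avoid_prob_bounded_states step_prob_pos in auto)

lemma n_step_supported: "set_pmf (n_step K n (\<lambda>_. 0)) \<subseteq> strata_supported m"
proof (induction n)
  case 0
  then show ?case by (simp add: strata_supported_def)
next
  case (Suc n)
  then show ?case using closed by auto
qed

theorem pos_recurrent_chain_K: "pos_recurrent_chain K (\<lambda>_. 0)"
  unfolding pos_recurrent_chain_def
proof (intro allI impI)
  fix E assume "\<exists>n\<ge>1. 0 < pmf (n_step K n (\<lambda>_. 0)) E"
  then obtain n where "E \<in> set_pmf (n_step K n (\<lambda>_. 0))"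
    by (metis less_irrefl set_pmf_iff)
  then show "pos_recurrent_state K E"
    using n_step_supported pos_recurrent_state_K by blast
qed

end

lemma u_star_eq:
  "u_star wo wm m = (real (m 1 * m 2) - 1) * wo + (real (m 1) - 1) * wm 2 + (real (m 2) - 1) * wm 1"
proof -
  have "{S. S \<subseteq> {1, 2::nat} \<and> S \<noteq> {}} = Pow {1, 2} - {{}}"
    by auto
  also have "\<dots> = {{1}, {2}, {1, 2}}"
    by (auto simp: Pow_insert insert_commute)
  finally have subsets: "{S. S \<subseteq> {1, 2::nat} \<and> S \<noteq> {}} = {{1}, {2}, {1, 2}}" .
  have "u_star wo wm m = (wo + wm 2) * (real (m 1) - 1) + (wo + wm 1) * (real (m 2) - 1)
      + wo * ((real (m 1) - 1) * (real (m 2) - 1))"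
    unfolding u_star_def subsets by (simp add: insert_Diff_if)
  then show ?thesis
    by (simp add: algebra_simps)
qed

lemma stratum_weight_pos:
  fixes m :: "nat \<Rightarrow> nat" and wo ws :: real and wm :: "nat \<Rightarrow> real"
  assumes "m 1 > 1" "m 2 > 1" "wo \<ge> 0" "wm 1 \<ge> 0" "wm 2 \<ge> 0"
    and "wo + wm 1 + wm 2 + ws = 1"
    and "(real (m 1 * m 2) - 1) * wo + (real (m 1) - 1) * wm 2 + (real (m 2) - 1) * wm 1 < 1/2"
  shows "ws > 0"
proof -
  have "2 * 2 \<le> m 1 * m 2"
    using assms(1,2) by (intro mult_le_mono) auto
  then have "1 \<le> real (m 1 * m 2) - 1"
    by linarith
  then have "wo \<le> (real (m 1 * m 2) - 1) * wo"
    using assms(3) by (simp add: mult_le_cancel_right1 del: of_nat_mult)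
  moreover have "wm 2 \<le> (real (m 1) - 1) * wm 2" "wm 1 \<le> (real (m 2) - 1) * wm 1"
    using assms(1,2,4,5) by (simp_all add: mult_le_cancel_right1)
  ultimately show ?thesis
    using assms(6,7) by linarith
qed

theorem corollary2:
  fixes m :: "nat \<Rightarrow> nat" and wo ws p q :: real and wm :: "nat \<Rightarrow> real"
    and \<pi> :: "(nat \<times> nat) pmf"
  assumes m1: "m 1 > 1" and m2: "m 2 > 1"
    and w_nonneg: "wo \<ge> 0" "wm 1 \<ge> 0" "wm 2 \<ge> 0" "ws \<ge> 0"
    and w_sum: "wo + wm 1 + wm 2 + ws = 1"
    and pq: "0 < q" "q < p" "p < 1" "p + q = 1"
    and \<pi>_supp: "set_pmf \<pi> = strata m"
  shows "(u_star wo wm m < 1/2 \<longleftrightarrow>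
           (real (m 1 * m 2) - 1) * wo + (real (m 1) - 1) * wm 2 + (real (m 2) - 1) * wm 1 < 1/2)
       \<and> ((real (m 1 * m 2) - 1) * wo + (real (m 1) - 1) * wm 2 + (real (m 2) - 1) * wm 1 < 1/2
           \<longrightarrow> pos_recurrent_chain (car_kernel p q wo wm ws m \<pi>) (\<lambda>_. 0))"
proof (intro conjI impI)
  show "u_star wo wm m < 1/2 \<longleftrightarrow>
      (real (m 1 * m 2) - 1) * wo + (real (m 1) - 1) * wm 2 + (real (m 2) - 1) * wm 1 < 1/2"
    by (simp add: u_star_eq)
next
  assume "(real (m 1 * m 2) - 1) * wo + (real (m 1) - 1) * wm 2 + (real (m 2) - 1) * wm 1 < 1/2"
  then have "ws > 0"
    using stratum_weight_pos m1 m2 w_nonneg w_sum by blast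
  then interpret car_chain p q wo ws wm m \<pi>
    using m1 m2 w_nonneg w_sum pq \<pi>_supp by unfold_locales auto
  show "pos_recurrent_chain (car_kernel p q wo wm ws m \<pi>) (\<lambda>_. 0)"
    by (rule pos_recurrent_chain_K)
qed

end
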